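(* Let $\ell^\infty\neq0$ be a complex constant. For $k\in\{1,2\}$ let $\Sigma^{(k)}$ be finite disjoint index sets, and for $\alpha\in\Sigma^{(k)}$ let $m_\alpha\ge1$, $z_\alpha\in\mathbb C$ (pairwise distinct within each $\Sigma^{(k)}$), and $\ell^\alpha_{[p]}\in\mathbb C$ ($0\le p\le m_\alpha-1$) with $\ell^\alpha_{[m_\alpha-1]}\neq0$. Let $\chi_k(z)=\sum_{\alpha\in\Sigma^{(k)}}\sum_{p=0}^{m_\alpha-1}\frac{\ell^\alpha_{[p]}}{(z-z_\alpha)^{p+1}}$, $\varphi_k=\chi_k-\ell^\infty$, $M_k=\sum_{\alpha\in\Sigma^{(k)}}m_\alpha$, $M=M_1+M_2$, and assume the zeros $\zeta^{(1)}_i$ ($1\le i\le M_1$) of $\varphi_1$ and $\zeta^{(2)}_i$ ($M_1<i\le M$) of $\varphi_2$ are simple. For $\gamma\neq0$ let $\varphi_{1\otimes2,\gamma}(z)=\chi_1(z)+\chi_2(z-\gamma^{-1})-\ell^\infty$, and for $\gamma$ small let $\zeta_i(\gamma)$ be its zeros labelled so that $\zeta_i(\gamma)=\zeta^{(1)}_i+O(\gamma)$ for $i\le M_1$ and $\zeta_i(\gamma)=\gamma^{-1}+\zeta^{(2)}_i+O(\gamma)$ for $i>M_1$. Then for each $i\in\{1,\dots,M\}$, $\varphi_{1\otimes2,\gamma}'(\zeta_i(\gamma))=\varphi_k'(\zeta^{(k)}_i)+O(\gamma)$, with $k=1$ if $i\le M_1$ and $k=2$ if $i>M_1$. *)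

theory Defs
  imports "HOL-Analysis.Analysis" "HOL-Library.Landau_Symbols"
begin

text \<open>The rational function chi_k(w) = sum over alpha in S, p < m alpha of
  l alpha p / (w - z alpha)^(p+1).  Only meaningful away from the poles z ` S.\<close>
definition chi :: "'a set \<Rightarrow> ('a \<Rightarrow> nat) \<Rightarrow> ('a \<Rightarrow> complex) \<Rightarrow> ('a \<Rightarrow> nat \<Rightarrow> complex)
                   \<Rightarrow> complex \<Rightarrow> complex" where
  "chi S m z l w = (\<Sum>\<alpha>\<in>S. \<Sum>p<m \<alpha>. l \<alpha> p / (w - z \<alpha>) ^ (p + 1))"

definition phi :: "'a set \<Rightarrow> ('a \<Rightarrow> nat) \<Rightarrow> ('a \<Rightarrow> complex) \<Rightarrow> ('a \<Rightarrow> nat \<Rightarrow> complex)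
                   \<Rightarrow> complex \<Rightarrow> complex \<Rightarrow> complex" where
  "phi S m z l linf w = chi S m z l w - linf"

definition phi12 :: "'a set \<Rightarrow> 'a set \<Rightarrow> ('a \<Rightarrow> nat) \<Rightarrow> ('a \<Rightarrow> complex) \<Rightarrow> ('a \<Rightarrow> nat \<Rightarrow> complex)
                   \<Rightarrow> complex \<Rightarrow> complex \<Rightarrow> complex \<Rightarrow> complex" where
  "phi12 S1 S2 m z l linf \<gamma> w = chi S1 m z l w + chi S2 m z l (w - inverse \<gamma>) - linf"

definition poles12 :: "'a set \<Rightarrow> 'a set \<Rightarrow> ('a \<Rightarrow> complex) \<Rightarrow> complex \<Rightarrow> complex set" where
  "poles12 S1 S2 z \<gamma> = z ` S1 \<union> (\<lambda>\<alpha>. z \<alpha> + inverse \<gamma>) ` S2"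

end

theory Submission imports Defs begin

text \<open>At a zero zeta_i(gamma) coming from phi_k, the derivative of phi12 is the derivative
  of chi_k at zeta_i(gamma), which is O(gamma)-close to phi_k'(zeta_i) because the zero moves
  by O(gamma), plus the derivative of the other chi at a point at distance of order 1/gamma
  from all of its poles, which decays like the inverse square and so is O(gamma^2).\<close>

definition dchi :: "'a set \<Rightarrow> ('a \<Rightarrow> nat) \<Rightarrow> ('a \<Rightarrow> complex) \<Rightarrow> ('a \<Rightarrow> nat \<Rightarrow> complex)
                    \<Rightarrow> complex \<Rightarrow> complex" where
  "dchi S m z l w = (\<Sum>\<alpha>\<in>S. \<Sum>p<m \<alpha>. - (of_nat (p + 1) * l \<alpha> p) / (w - z \<alpha>) ^ (p + 2))"

lemma has_field_derivative_pole_term: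
  fixes a c w :: complex
  assumes "w \<noteq> a"
  shows "((\<lambda>w. c / (w - a) ^ (p + 1)) has_field_derivative
           - (of_nat (p + 1) * c) / (w - a) ^ (p + 2)) (at w)"
proof -
  have "((\<lambda>w. (w - a) ^ (p + 1)) has_field_derivative of_nat (p + 1) * (w - a) ^ p) (at w)"
    by (rule derivative_eq_intros refl | simp)+
  moreover have "(w - a) ^ (p + 1) \<noteq> 0" using assms by simp
  ultimately have "((\<lambda>w. c * inverse ((w - a) ^ (p + 1))) has_field_derivative
      c * - (of_nat (p + 1) * (w - a) ^ p * inverse (((w - a) ^ (p + 1)) ^ Suc (Suc 0)))) (at w)"
    by (intro DERIV_cmult DERIV_inverse_fun)
  then have "((\<lambda>w. c / (w - a) ^ (p + 1)) has_field_derivative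
      c * - (of_nat (p + 1) * (w - a) ^ p * inverse (((w - a) ^ (p + 1)) ^ Suc (Suc 0)))) (at w)"
    by (simp only: divide_inverse)
  moreover have "c * - (of_nat (p + 1) * d ^ p * inverse ((d ^ (p + 1)) ^ Suc (Suc 0)))
      = - (of_nat (p + 1) * c) / d ^ (p + 2)" if "d \<noteq> 0" for d :: complex
    using that by (simp add: field_simps power_add)
  ultimately show ?thesis using assms by simp
qed

lemma has_field_derivative_chi:
  assumes "finite S" "w \<notin> z ` S"
  shows "(chi S m z l has_field_derivative dchi S m z l w) (at w)"
  unfolding chi_def[abs_def] dchi_def
  using assms by (intro DERIV_sum has_field_derivative_pole_term) auto

lemma deriv_phi:
  assumes "finite S" "w \<notin> z ` S"
  shows "deriv (phi S m z l linf) w = dchi S m z l w"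
  unfolding phi_def[abs_def]
  using has_field_derivative_chi[OF assms]
  by (intro DERIV_imp_deriv) (auto intro!: derivative_eq_intros)

lemma deriv_phi12:
  assumes "finite S1" "finite S2" "w \<notin> z ` S1" "w - inverse \<gamma> \<notin> z ` S2"
  shows "deriv (phi12 S1 S2 m z l linf \<gamma>) w = dchi S1 m z l w + dchi S2 m z l (w - inverse \<gamma>)"
proof -
  have "((\<lambda>w. chi S2 m z l (w - inverse \<gamma>)) has_field_derivative dchi S2 m z l (w - inverse \<gamma>) * 1) (at w)"
    using has_field_derivative_chi[OF assms(2,4)]
    by (intro DERIV_chain2[where f = "chi S2 m z l"]) (auto intro!: derivative_eq_intros)
  then show ?thesis
    unfolding phi12_def[abs_def]
    using has_field_derivative_chi[OF assms(1,3), of m l]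
    by (intro DERIV_imp_deriv) (auto intro!: derivative_eq_intros)
qed

lemma holomorphic_dchi: "finite S \<Longrightarrow> dchi S m z l holomorphic_on - z ` S"
  unfolding dchi_def by (intro holomorphic_intros) auto

lemma bigo_imp_tendsto_zero:
  fixes f h :: "'a \<Rightarrow> 'b::real_normed_field"
  assumes "f \<in> O[F](h)" "(h \<longlongrightarrow> 0) F"
  shows "(f \<longlongrightarrow> 0) F"
proof -
  obtain c where c: "eventually (\<lambda>x. norm (f x) \<le> c * norm (h x)) F"
    using landau_o.bigE[OF assms(1)] by blast
  have "((\<lambda>x. c * norm (h x)) \<longlongrightarrow> c * 0) F"
    by (intro tendsto_mult tendsto_const tendsto_norm_zero assms(2))
  then show ?thesis using Lim_null_comparison[OF c] by simp
qed

lemma bigo_diff_compose_field_differentiable: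
  fixes f :: "'b::real_normed_field \<Rightarrow> 'b" and h :: "'a \<Rightarrow> 'b"
  assumes "f field_differentiable (at w0)" "(g \<longlongrightarrow> w0) F" "(\<lambda>x. g x - w0) \<in> O[F](h)"
  shows "(\<lambda>x. f (g x) - f w0) \<in> O[F](h)"
proof -
  obtain q where q: "\<And>w. f w - f w0 = q w * (w - w0)" "isCont q w0"
    using assms(1) unfolding field_differentiable_def CARAT_DERIV by blast
  have "((\<lambda>x. q (g x)) \<longlongrightarrow> q w0) F"
    using isCont_tendsto_compose[OF q(2) assms(2)] .
  then have "(\<lambda>x. q (g x)) \<in> O[F](\<lambda>_. 1)"
    by (intro bigoI_tendsto[where c = "q w0"]) simp_all
  from landau_o.big_mult[OF this assms(3)] show ?thesis by (simp add: q(1))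
qed

lemma tendsto_pole_term_div_param:
  fixes v :: "complex \<Rightarrow> complex"
  assumes "((\<lambda>\<gamma>. \<gamma> * (v \<gamma> - a)) \<longlongrightarrow> c) (at 0)" "c \<noteq> 0"
  shows "((\<lambda>\<gamma>. k / (v \<gamma> - a) ^ (n + 2) / \<gamma>) \<longlongrightarrow> 0) (at 0)"
proof -
  have "k * \<gamma> ^ (n + 1) / (\<gamma> * y) ^ (n + 2) = k / y ^ (n + 2) / \<gamma>"
    if "\<gamma> \<noteq> 0" for \<gamma> y :: complex
    using that by (cases "y = 0") (simp_all add: power_mult_distrib power_add field_simps)
  then have "\<forall>\<^sub>F \<gamma> in at 0. k * \<gamma> ^ (n + 1) / (\<gamma> * (v \<gamma> - a)) ^ (n + 2)
      = k / (v \<gamma> - a) ^ (n + 2) / \<gamma>"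
    by (simp add: eventually_at_filter)
  moreover have "((\<lambda>\<gamma>. k * \<gamma> ^ (n + 1) / (\<gamma> * (v \<gamma> - a)) ^ (n + 2))
      \<longlongrightarrow> k * 0 ^ (n + 1) / c ^ (n + 2)) (at 0)"
    using assms by (intro tendsto_intros) auto
  ultimately show ?thesis by (simp add: tendsto_cong)
qed

lemma dchi_far_bigo:
  fixes v :: "complex \<Rightarrow> complex"
  assumes "finite S" "((\<lambda>\<gamma>. \<gamma> * v \<gamma>) \<longlongrightarrow> c) (at 0)" "c \<noteq> 0"
  shows "\<forall>\<^sub>F \<gamma> in at 0. v \<gamma> \<notin> z ` S"
    and "(\<lambda>\<gamma>. dchi S m z l (v \<gamma>)) \<in> O[at 0](\<lambda>\<gamma>. \<gamma>)"
proof -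
  have shifted: "((\<lambda>\<gamma>. \<gamma> * (v \<gamma> - a)) \<longlongrightarrow> c) (at 0)" for a
  proof -
    have "((\<lambda>\<gamma>. \<gamma> * v \<gamma> - \<gamma> * a) \<longlongrightarrow> c - 0 * a) (at 0)"
      by (intro tendsto_intros assms(2))
    then show ?thesis by (simp add: algebra_simps)
  qed
  have "\<forall>\<^sub>F \<gamma> in at 0. v \<gamma> \<noteq> a" for a
    using tendsto_imp_eventually_ne[OF shifted[of a] assms(3)] by (rule eventually_mono) auto
  then have "\<forall>\<^sub>F \<gamma> in at 0. \<forall>a\<in>z ` S. v \<gamma> \<noteq> a"
    using assms(1) by (simp add: eventually_ball_finite_distrib)
  then show "\<forall>\<^sub>F \<gamma> in at 0. v \<gamma> \<notin> z ` S"
    by (rule eventually_mono) blast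
  have "((\<lambda>\<gamma>. dchi S m z l (v \<gamma>) / \<gamma>) \<longlongrightarrow> 0) (at 0)"
    unfolding dchi_def sum_divide_distrib
    by (intro tendsto_null_sum tendsto_pole_term_div_param[OF shifted assms(3)])
  then show "(\<lambda>\<gamma>. dchi S m z l (v \<gamma>)) \<in> O[at 0](\<lambda>\<gamma>. \<gamma>)"
    by (rule bigoI_tendsto) (simp add: eventually_at_filter)
qed

text \<open>A zero u of one factor, seen from the other factor of phi12, sits at
  u + c / gamma with c = -1 or c = 1.\<close>

lemma dchi_near_far_bigo:
  fixes u :: "complex \<Rightarrow> complex"
  assumes "finite S" "finite T" "w0 \<notin> z ` S" "(\<lambda>\<gamma>. u \<gamma> - w0) \<in> O[at 0](\<lambda>\<gamma>. \<gamma>)" "c \<noteq> 0"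
  shows "\<forall>\<^sub>F \<gamma> in at 0. u \<gamma> \<notin> z ` S \<and> u \<gamma> + c * inverse \<gamma> \<notin> z ` T"
    and "(\<lambda>\<gamma>. dchi S m z l (u \<gamma>) + dchi T m z l (u \<gamma> + c * inverse \<gamma>) - dchi S m z l w0)
           \<in> O[at 0](\<lambda>\<gamma>. \<gamma>)"
proof -
  have "((\<lambda>\<gamma>. u \<gamma> - w0) \<longlongrightarrow> 0) (at 0)"
    using bigo_imp_tendsto_zero[OF assms(4) tendsto_ident_at] .
  then have u: "(u \<longlongrightarrow> w0) (at 0)"
    using tendsto_add_const_iff[of "- w0" u w0] by simp
  have "open (- z ` S)"
    using assms(1) by (simp add: finite_imp_closed open_Compl)
  then have "\<forall>\<^sub>F \<gamma> in at 0. u \<gamma> \<in> - z ` S"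
    using topological_tendstoD[OF u] assms(3) by blast
  then have near: "\<forall>\<^sub>F \<gamma> in at 0. u \<gamma> \<notin> z ` S"
    by simp
  have "((\<lambda>\<gamma>. \<gamma> * u \<gamma> + c) \<longlongrightarrow> c) (at 0)"
    using tendsto_add[OF tendsto_mult[OF tendsto_ident_at u] tendsto_const, of c] by simp
  then have "((\<lambda>\<gamma>. \<gamma> * (u \<gamma> + c * inverse \<gamma>)) \<longlongrightarrow> c) (at 0)"
    by (rule Lim_transform_eventually) (simp add: eventually_at_filter field_simps)
  note far = dchi_far_bigo[OF assms(2) this assms(5)]
  show "\<forall>\<^sub>F \<gamma> in at 0. u \<gamma> \<notin> z ` S \<and> u \<gamma> + c * inverse \<gamma> \<notin> z ` T"
    using near far(1) by eventually_elim simp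
  have "dchi S m z l field_differentiable at w0"
    using holomorphic_on_imp_differentiable_at[OF holomorphic_dchi[OF assms(1)] \<open>open (- z ` S)\<close>]
      assms(3) by simp
  from sum_in_bigo(1)[OF bigo_diff_compose_field_differentiable[OF this u assms(4)] far(2)]
  show "(\<lambda>\<gamma>. dchi S m z l (u \<gamma>) + dchi T m z l (u \<gamma> + c * inverse \<gamma>) - dchi S m z l w0)
          \<in> O[at 0](\<lambda>\<gamma>. \<gamma>)"
    by (simp add: algebra_simps)
qed

theorem lemmaC3:
  fixes S1 S2 :: "'a set" and m :: "'a \<Rightarrow> nat" and z :: "'a \<Rightarrow> complex"
    and l :: "'a \<Rightarrow> nat \<Rightarrow> complex" and linf :: complex
    and M1 M :: nat and zeta0 :: "nat \<Rightarrow> complex"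
    and zeta :: "nat \<Rightarrow> complex \<Rightarrow> complex"
  assumes linf: "linf \<noteq> 0"
    and fin: "finite S1" "finite S2" and disj: "S1 \<inter> S2 = {}"
    and m_pos: "\<And>\<alpha>. \<alpha> \<in> S1 \<union> S2 \<Longrightarrow> m \<alpha> \<ge> 1"
    and z_inj: "inj_on z S1" "inj_on z S2"
    and l_top: "\<And>\<alpha>. \<alpha> \<in> S1 \<union> S2 \<Longrightarrow> l \<alpha> (m \<alpha> - 1) \<noteq> 0"
    and M1_def: "M1 = (\<Sum>\<alpha>\<in>S1. m \<alpha>)"
    and M_def: "M = M1 + (\<Sum>\<alpha>\<in>S2. m \<alpha>)"
    \<comment> \<open>zeta0 1..M1 are exactly the zeros of phi_1, all simple\<close>
    and zeros1: "inj_on zeta0 {1..M1}"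
      "{w. w \<notin> z ` S1 \<and> phi S1 m z l linf w = 0} = zeta0 ` {1..M1}"
      "\<And>i. i \<in> {1..M1} \<Longrightarrow> deriv (phi S1 m z l linf) (zeta0 i) \<noteq> 0"
    \<comment> \<open>zeta0 (M1+1)..M are exactly the zeros of phi_2, all simple\<close>
    and zeros2: "inj_on zeta0 {M1<..M}"
      "{w. w \<notin> z ` S2 \<and> phi S2 m z l linf w = 0} = zeta0 ` {M1<..M}"
      "\<And>i. i \<in> {M1<..M} \<Longrightarrow> deriv (phi S2 m z l linf) (zeta0 i) \<noteq> 0"
    \<comment> \<open>for small gamma, zeta i gamma (i = 1..M) are the zeros of phi_{1(x)2,gamma}\<close>
    and zeros12: "\<forall>\<^sub>F \<gamma> in at 0. inj_on (\<lambda>i. zeta i \<gamma>) {1..M} \<and>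
        {w. w \<notin> poles12 S1 S2 z \<gamma> \<and> phi12 S1 S2 m z l linf \<gamma> w = 0}
          = (\<lambda>i. zeta i \<gamma>) ` {1..M}"
    \<comment> \<open>labelling of the zeros\<close>
    and lab1: "\<And>i. i \<in> {1..M1} \<Longrightarrow>
        (\<lambda>\<gamma>. zeta i \<gamma> - zeta0 i) \<in> O[at 0](\<lambda>\<gamma>. \<gamma>)"
    and lab2: "\<And>i. i \<in> {M1<..M} \<Longrightarrow>
        (\<lambda>\<gamma>. zeta i \<gamma> - inverse \<gamma> - zeta0 i) \<in> O[at 0](\<lambda>\<gamma>. \<gamma>)"
  shows "(\<forall>i\<in>{1..M1}. (\<lambda>\<gamma>. deriv (phi12 S1 S2 m z l linf \<gamma>) (zeta i \<gamma>)
              - deriv (phi S1 m z l linf) (zeta0 i)) \<in> O[at 0](\<lambda>\<gamma>. \<gamma>))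
       \<and> (\<forall>i\<in>{M1<..M}. (\<lambda>\<gamma>. deriv (phi12 S1 S2 m z l linf \<gamma>) (zeta i \<gamma>)
              - deriv (phi S2 m z l linf) (zeta0 i)) \<in> O[at 0](\<lambda>\<gamma>. \<gamma>))"
proof (intro conjI ballI)
  fix i assume i: "i \<in> {1..M1}"
  have "zeta0 i \<notin> z ` S1" using zeros1(2) i by blast
  note bound = dchi_near_far_bigo[OF fin this lab1[OF i] neg_one_neq_zero]
  have "\<forall>\<^sub>F \<gamma> in at 0.
      dchi S1 m z l (zeta i \<gamma>) + dchi S2 m z l (zeta i \<gamma> + -1 * inverse \<gamma>) - dchi S1 m z l (zeta0 i)
      = deriv (phi12 S1 S2 m z l linf \<gamma>) (zeta i \<gamma>) - deriv (phi S1 m z l linf) (zeta0 i)"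
    using bound(1)
    by eventually_elim (use deriv_phi12[OF fin] deriv_phi[OF fin(1) \<open>zeta0 i \<notin> z ` S1\<close>] in auto)
  from landau_o.big.in_cong[OF this] bound(2)
  show "(\<lambda>\<gamma>. deriv (phi12 S1 S2 m z l linf \<gamma>) (zeta i \<gamma>)
      - deriv (phi S1 m z l linf) (zeta0 i)) \<in> O[at 0](\<lambda>\<gamma>. \<gamma>)"
    by (rule iffD1)
next
  fix i assume i: "i \<in> {M1<..M}"
  have "zeta0 i \<notin> z ` S2" using zeros2(2) i by blast
  note bound = dchi_near_far_bigo[OF fin(2,1) this lab2[OF i] one_neq_zero]
  have "\<forall>\<^sub>F \<gamma> in at 0.
      dchi S2 m z l (zeta i \<gamma> - inverse \<gamma>) + dchi S1 m z l (zeta i \<gamma> - inverse \<gamma> + 1 * inverse \<gamma>)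
      - dchi S2 m z l (zeta0 i)
      = deriv (phi12 S1 S2 m z l linf \<gamma>) (zeta i \<gamma>) - deriv (phi S2 m z l linf) (zeta0 i)"
    using bound(1)
    by eventually_elim (use deriv_phi12[OF fin] deriv_phi[OF fin(2) \<open>zeta0 i \<notin> z ` S2\<close>] in auto)
  from landau_o.big.in_cong[OF this] bound(2)
  show "(\<lambda>\<gamma>. deriv (phi12 S1 S2 m z l linf \<gamma>) (zeta i \<gamma>)
      - deriv (phi S2 m z l linf) (zeta0 i)) \<in> O[at 0](\<lambda>\<gamma>. \<gamma>)"
    by (rule iffD1)
qed

end
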